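(* There exist quantum predictions in the two-superobserver, two-friend extended Wigner's friend scenario that are incompatible with Possibilistic Local Friendliness. Precisely, there exist the following data: - a state $|\Psi\rangle$ on $\mathcal H_A\otimes\mathcal H_B$, where $\mathcal H_A$ (Charlie's laboratory, including his system) contains orthonormal record states $|C_0\rangle,|C_1\rangle$ and $\mathcal H_B$ (Debbie's laboratory) contains orthonormal record states $|D_0\rangle,|D_1\rangle$; - projective measurements $\{A_x(a)\}_{a\in\{0,1\}}$ on $\mathcal H_A$ and $\{B_y(b)\}_{b\in\{0,1\}}$ on $\mathcal H_B$, where $x,y\in\{1,2\}$, and where $A_1$ and $B_1$ are the record-readout measurements ($A_1(0)=|C_0\rangle\langle C_0|$, $A_1(1)=I-|C_0\rangle\langle C_0|$, and similarly for $B_1$ with $|D_0\rangle$). For these data, the possibility set $S=\{(a,b,x,y): \langle\Psi|A_x(a)\otimes B_y(b)|\Psi\rangle>0\}$ admits no Possibilistic Local Friendliness model reproducing it.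
   Context: Scenario. Two space-like separated superobservers, Alice and Bob, have friends Charlie and Debbie respectively. Each friend measures a system inside a sealed laboratory. - Charlie and Debbie record outcomes $C=c\in\{0,1\}$ and $D=d\in\{0,1\}$. - Alice chooses $X=x\in\{1,2\}$ and observes $A=a\in\{0,1\}$. Bob chooses $Y=y\in\{1,2\}$ and observes $B=b\in\{0,1\}$. - Setting $X=1$ means Alice asks Charlie for his result and sets $A=C$. Setting $Y=1$ means Bob asks Debbie and sets $B=D$. - Spacetime relations: $X$ is not in the past light cone of any of $B,Y,C,D$, and $Y$ is not in the past light cone of any of $A,X,C,D$. Possibilistic Local Friendliness (PLF) model for a possibility set $S\subseteq\{0,1\}^2\times\{1,2\}^2$. This is a set $T\subseteq\{0,1\}^4\times\{1,2\}^2$ of possible joint assignments $(a,b,c,d,x,y)$. By Absoluteness of Observed Events, every observed variable, including $C$ and $D$, has a definite value in every run. $T$ must satisfy the following. - Every $t\in T$ with $x=1$ has $a=c$, and every $t\in T$ with $y=1$ has $b=d$. - Possibilistic Local Agency: call a partial assignment $E$ possible if it agrees with some element of $T$. If $E$ is possible, then for any intervention $Z\in\{X,Y\}$ not in the past light cone of any variable assigned in $E$, and for every value $z$, the assignment $E$ together with $Z=z$ is possible. - The projection of $T$ onto $(a,b,x,y)$ equals $S$. *)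

theory Defs
  imports Complex_Main
begin

text \<open>A vector in C^n is a function nat => complex, only the coordinates below n
matter. An operator on C^n is a function nat => nat => complex (matrix entries).
A vector in C^nA tensor C^nB is given by its coefficients Psi i j.\<close>

definition cinner :: "nat \<Rightarrow> (nat \<Rightarrow> complex) \<Rightarrow> (nat \<Rightarrow> complex) \<Rightarrow> complex" where
  "cinner n u v = (\<Sum>i<n. cnj (u i) * v i)"

definition orthonormal2 :: "nat \<Rightarrow> (nat \<Rightarrow> complex) \<Rightarrow> (nat \<Rightarrow> complex) \<Rightarrow> bool" where
  "orthonormal2 n u v \<longleftrightarrow> cinner n u u = 1 \<and> cinner n v v = 1 \<and> cinner n u v = 0"

definition is_projector :: "nat \<Rightarrow> (nat \<Rightarrow> nat \<Rightarrow> complex) \<Rightarrow> bool" where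
  "is_projector n P \<longleftrightarrow>
     (\<forall>i<n. \<forall>j<n. P i j = cnj (P j i)) \<and>
     (\<forall>i<n. \<forall>j<n. (\<Sum>k<n. P i k * P k j) = P i j)"

definition proj_meas :: "nat \<Rightarrow> (nat \<Rightarrow> nat \<Rightarrow> nat \<Rightarrow> complex) \<Rightarrow> bool" where
  "proj_meas n P \<longleftrightarrow> is_projector n (P 0) \<and> is_projector n (P 1) \<and>
     (\<forall>i<n. \<forall>j<n. P 0 i j + P 1 i j = (if i = j then 1 else 0))"

definition unit_state :: "nat \<Rightarrow> nat \<Rightarrow> (nat \<Rightarrow> nat \<Rightarrow> complex) \<Rightarrow> bool" where
  "unit_state nA nB Psi \<longleftrightarrow> (\<Sum>i<nA. \<Sum>j<nB. cnj (Psi i j) * Psi i j) = 1"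

text \<open>\<langle>Psi| P \<otimes> Q |Psi\<rangle>\<close>
definition expect2 :: "nat \<Rightarrow> nat \<Rightarrow> (nat \<Rightarrow> nat \<Rightarrow> complex) \<Rightarrow>
     (nat \<Rightarrow> nat \<Rightarrow> complex) \<Rightarrow> (nat \<Rightarrow> nat \<Rightarrow> complex) \<Rightarrow> complex" where
  "expect2 nA nB Psi P Q =
     (\<Sum>i<nA. \<Sum>j<nB. \<Sum>k<nA. \<Sum>l<nB. cnj (Psi i j) * P i k * Q j l * Psi k l)"

definition readout :: "nat \<Rightarrow> (nat \<Rightarrow> complex) \<Rightarrow> (nat \<Rightarrow> nat \<Rightarrow> nat \<Rightarrow> complex) \<Rightarrow> bool" where
  "readout n v P \<longleftrightarrow> (\<forall>i<n. \<forall>j<n. P 0 i j = v i * cnj (v j) \<and>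
                         P 1 i j = (if i = j then 1 else 0) - v i * cnj (v j))"

definition possibility_set :: "nat \<Rightarrow> nat \<Rightarrow> (nat \<Rightarrow> nat \<Rightarrow> complex) \<Rightarrow>
    (nat \<Rightarrow> nat \<Rightarrow> nat \<Rightarrow> nat \<Rightarrow> complex) \<Rightarrow> (nat \<Rightarrow> nat \<Rightarrow> nat \<Rightarrow> nat \<Rightarrow> complex) \<Rightarrow>
    (nat \<times> nat \<times> nat \<times> nat) set" where
  "possibility_set nA nB Psi A B =
     {(a, b, x, y). a \<in> {0,1} \<and> b \<in> {0,1} \<and> x \<in> {1,2} \<and> y \<in> {1,2} \<and>
        Re (expect2 nA nB Psi (A x a) (B y b)) > 0}"

datatype var = VA | VB | VC | VD | VX | VY

type_synonym run = "nat \<times> nat \<times> nat \<times> nat \<times> nat \<times> nat"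

fun val :: "var \<Rightarrow> run \<Rightarrow> nat" where
  "val VA (a,b,c,d,x,y) = a"
| "val VB (a,b,c,d,x,y) = b"
| "val VC (a,b,c,d,x,y) = c"
| "val VD (a,b,c,d,x,y) = d"
| "val VX (a,b,c,d,x,y) = x"
| "val VY (a,b,c,d,x,y) = y"

definition possible :: "run set \<Rightarrow> (var \<Rightarrow> nat option) \<Rightarrow> bool" where
  "possible T E \<longleftrightarrow> (\<exists>t\<in>T. \<forall>v w. E v = Some w \<longrightarrow> val v t = w)"

text \<open>Variables in whose past light cone the intervention lies is NOT:
X is not in the past light cone of B,Y,C,D; Y is not in that of A,X,C,D.\<close>
definition not_cause_of :: "var \<Rightarrow> var set" where
  "not_cause_of Z = (if Z = VX then {VB, VY, VC, VD} else if Z = VY then {VA, VX, VC, VD} else {})"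

definition PLF_model :: "(nat \<times> nat \<times> nat \<times> nat) set \<Rightarrow> run set \<Rightarrow> bool" where
  "PLF_model S T \<longleftrightarrow>
     T \<subseteq> {(a,b,c,d,x,y). a \<in> {0,1} \<and> b \<in> {0,1} \<and> c \<in> {0,1} \<and> d \<in> {0,1} \<and>
                          x \<in> {1,2} \<and> y \<in> {1,2}} \<and>
     (\<forall>(a,b,c,d,x,y)\<in>T. x = 1 \<longrightarrow> a = c) \<and>
     (\<forall>(a,b,c,d,x,y)\<in>T. y = 1 \<longrightarrow> b = d) \<and>
     (\<forall>E Z z. possible T E \<and> Z \<in> {VX, VY} \<and> dom E \<subseteq> not_cause_of Z \<and> z \<in> {1,2}
          \<longrightarrow> possible T (E(Z \<mapsto> z))) \<and>
     (\<lambda>(a,b,c,d,x,y). (a,b,x,y)) ` T = S"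

end

theory Submission
  imports Defs
begin

text \<open>Hardy's paradox. Let setting 1 read out the records and setting 2 measure a rotated
  basis, and take Hardy's state: then outcome \<open>(0, 0)\<close> is possible at settings \<open>(1, 1)\<close>,
  whereas \<open>(a, b, x, y) = (0, 1, 1, 2), (1, 0, 2, 1), (0, 0, 2, 2)\<close> are impossible. In a PLF
  model, a run with outcome \<open>(0, 0)\<close> at settings \<open>(1, 1)\<close> has records \<open>C = D = 0\<close>. Local
  agency lets both superobservers switch to setting 2 keeping these records, and from the
  resulting run each of them may switch back to setting 1 alone, where his outcome is the
  record 0. The two impossible events then force \<open>a = b = 0\<close> in the run at settings
  \<open>(2, 2)\<close>, which is impossible as well.\<close>

definition basis_vec :: "nat \<Rightarrow> nat \<Rightarrow> complex" where
  "basis_vec k i = (if i = k then 1 else 0)"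

definition line_proj :: "nat \<Rightarrow> (nat \<Rightarrow> complex) \<Rightarrow> nat \<Rightarrow> nat \<Rightarrow> complex" where
  "line_proj n w i j = w i * cnj (w j) / cinner n w w"

definition binary_meas :: "(nat \<Rightarrow> nat \<Rightarrow> complex) \<Rightarrow> nat \<Rightarrow> nat \<Rightarrow> nat \<Rightarrow> complex" where
  "binary_meas P a i j = (if a = 0 then P i j else (if i = j then 1 else 0) - P i j)"

lemma cnj_cinner_self: "cnj (cinner n w w) = cinner n w w"
  by (simp add: cinner_def mult.commute)

lemma is_projector_line_proj:
  assumes "cinner n w w \<noteq> 0"
  shows "is_projector n (line_proj n w)"
proof -
  let ?s = "cinner n w w"
  have "(\<Sum>k<n. line_proj n w i k * line_proj n w k j) = line_proj n w i j" for i j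
  proof -
    have "(\<Sum>k<n. line_proj n w i k * line_proj n w k j)
        = (\<Sum>k<n. w i * cnj (w j) / (?s * ?s) * (cnj (w k) * w k))"
      by (rule sum.cong) (simp_all add: line_proj_def mult_ac)
    also have "\<dots> = w i * cnj (w j) / (?s * ?s) * ?s"
      by (simp add: cinner_def sum_distrib_left)
    also have "\<dots> = line_proj n w i j"
      using assms by (simp add: line_proj_def)
    finally show ?thesis .
  qed
  moreover have "cnj (line_proj n w j i) = line_proj n w i j" for i j
    by (simp add: line_proj_def cnj_cinner_self mult.commute)
  ultimately show ?thesis
    by (simp add: is_projector_def)
qed

lemma proj_meas_binary_meas:
  assumes "is_projector n P"
  shows "proj_meas n (binary_meas P)"
proof -
  let ?Q = "\<lambda>i j. (if i = j then 1 else 0) - P i j"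
  have herm: "cnj (P j i) = P i j" and idem: "(\<Sum>k<n. P i k * P k j) = P i j"
    if "i < n" "j < n" for i j
    using assms that unfolding is_projector_def by metis+
  have "(\<Sum>k<n. ?Q i k * ?Q k j) = ?Q i j" if "i < n" "j < n" for i j
  proof -
    have "(\<Sum>k<n. ?Q i k * ?Q k j)
        = (\<Sum>k<n. if i = k then ?Q k j else 0) - (\<Sum>k<n. if k = j then P i k else 0)
          + (\<Sum>k<n. P i k * P k j)"
      unfolding sum_subtractf[symmetric] sum.distrib[symmetric]
      by (rule sum.cong) (auto simp: algebra_simps)
    also have "\<dots> = ?Q i j - P i j + P i j"
      using that idem by (simp add: sum.delta sum.delta')
    finally show ?thesis
      by simp
  qed
  moreover have "cnj (?Q j i) = ?Q i j" if "i < n" "j < n" for i j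
    using herm[OF that] by auto
  ultimately show ?thesis
    using herm idem by (simp add: proj_meas_def is_projector_def binary_meas_def)
qed

lemma readout_binary_meas:
  assumes "cinner n v v = 1"
  shows "readout n v (binary_meas (line_proj n v))"
  using assms by (simp add: readout_def binary_meas_def line_proj_def)

lemma PLF_model_possibility_set_iff:
  assumes "PLF_model S T"
  shows "(a, b, x, y) \<in> S \<longleftrightarrow> (\<exists>c d. (a, b, c, d, x, y) \<in> T)"
proof -
  have "(\<lambda>(a, b, c, d, x, y). (a, b, x, y)) ` T = S"
    using assms unfolding PLF_model_def by (elim conjE)
  then show ?thesis
    by force
qed

lemma PLF_model_outcomes_binary:
  assumes "PLF_model S T" "(a, b, c, d, x, y) \<in> T"
  shows "a \<in> {0, 1}" "b \<in> {0, 1}"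
proof -
  have "T \<subseteq> {(a, b, c, d, x, y). a \<in> {0, 1} \<and> b \<in> {0, 1} \<and> c \<in> {0, 1} \<and> d \<in> {0, 1} \<and>
                                x \<in> {1, 2} \<and> y \<in> {1, 2}}"
    using assms(1) unfolding PLF_model_def by (elim conjE)
  then show "a \<in> {0, 1}" "b \<in> {0, 1}"
    using assms(2) by blast+
qed

lemma PLF_model_readout_A:
  assumes "PLF_model S T" "(a, b, c, d, 1, y) \<in> T"
  shows "a = c"
proof -
  have "\<forall>(a, b, c, d, x, y) \<in> T. x = 1 \<longrightarrow> a = c"
    using assms(1) unfolding PLF_model_def by (elim conjE)
  then show ?thesis
    using assms(2) by fastforce
qed

lemma PLF_model_readout_B:
  assumes "PLF_model S T" "(a, b, c, d, x, 1) \<in> T"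
  shows "b = d"
proof -
  have "\<forall>(a, b, c, d, x, y) \<in> T. y = 1 \<longrightarrow> b = d"
    using assms(1) unfolding PLF_model_def by (elim conjE)
  then show ?thesis
    using assms(2) by fastforce
qed

lemma PLF_model_local_agency:
  assumes "PLF_model S T" "possible T E" "Z \<in> {VX, VY}" "dom E \<subseteq> not_cause_of Z" "z \<in> {1, 2}"
  shows "possible T (E(Z \<mapsto> z))"
proof -
  have "\<forall>E Z z. possible T E \<and> Z \<in> {VX, VY} \<and> dom E \<subseteq> not_cause_of Z \<and> z \<in> {1, 2}
          \<longrightarrow> possible T (E(Z \<mapsto> z))"
    using assms(1) unfolding PLF_model_def by (elim conjE)
  then show ?thesis
    using assms(2-) by blast
qed

lemma PLF_model_intervene_X:
  assumes "PLF_model S T" "(a, b, c, d, x, y) \<in> T" "x' \<in> {1, 2}"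
  obtains a' where "(a', b, c, d, x', y) \<in> T"
proof -
  let ?E = "[VB \<mapsto> b, VY \<mapsto> y, VC \<mapsto> c, VD \<mapsto> d]"
  have "possible T ?E"
    unfolding possible_def using assms(2) by force
  moreover have "dom ?E \<subseteq> not_cause_of VX"
    by (simp add: not_cause_of_def)
  ultimately have "possible T (?E(VX \<mapsto> x'))"
    using assms(1,3) PLF_model_local_agency by blast
  then obtain t where t: "t \<in> T"
    and agree: "\<And>v w. (?E(VX \<mapsto> x')) v = Some w \<Longrightarrow> val v t = w"
    unfolding possible_def by blast
  have "val VB t = b" "val VY t = y" "val VC t = c" "val VD t = d" "val VX t = x'"
    by (auto intro!: agree)
  then show thesis
    using that t by (cases t) auto
qed

lemma PLF_model_intervene_Y:
  assumes "PLF_model S T" "(a, b, c, d, x, y) \<in> T" "y' \<in> {1, 2}"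
  obtains b' where "(a, b', c, d, x, y') \<in> T"
proof -
  let ?E = "[VA \<mapsto> a, VX \<mapsto> x, VC \<mapsto> c, VD \<mapsto> d]"
  have "possible T ?E"
    unfolding possible_def using assms(2) by force
  moreover have "dom ?E \<subseteq> not_cause_of VY"
    by (simp add: not_cause_of_def)
  ultimately have "possible T (?E(VY \<mapsto> y'))"
    using assms(1,3) PLF_model_local_agency by blast
  then obtain t where t: "t \<in> T"
    and agree: "\<And>v w. (?E(VY \<mapsto> y')) v = Some w \<Longrightarrow> val v t = w"
    unfolding possible_def by blast
  have "val VA t = a" "val VX t = x" "val VC t = c" "val VD t = d" "val VY t = y'"
    by (auto intro!: agree)
  then show thesis
    using that t by (cases t) auto
qed

lemma no_PLF_model_if_Hardy_pattern:
  assumes "(0, 0, 1, 1) \<in> S"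
    and "(0, 1, 1, 2) \<notin> S" "(1, 0, 2, 1) \<notin> S" "(0, 0, 2, 2) \<notin> S"
  shows "\<not> PLF_model S T"
proof
  assume T: "PLF_model S T"
  obtain c d where "(0, 0, c, d, 1, 1) \<in> T"
    using T assms(1) PLF_model_possibility_set_iff by blast
  with T have "(0, 0, 0, 0, 1, 1) \<in> T"
    using PLF_model_readout_A PLF_model_readout_B by metis
  then obtain a\<^sub>1 where "(a\<^sub>1, 0, 0, 0, 2, 1) \<in> T"
    using T PLF_model_intervene_X by blast
  then obtain a b where run22: "(a, b, 0, 0, 2, 2) \<in> T"
    using T PLF_model_intervene_Y by blast
  have "a = 0"
  proof -
    obtain b' where "(a, b', 0, 0, 2, 1) \<in> T"
      using T run22 PLF_model_intervene_Y by blast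
    with T have "(a, 0, 2, 1) \<in> S"
      using PLF_model_readout_B PLF_model_possibility_set_iff by metis
    then show "a = 0"
      using assms(3) PLF_model_outcomes_binary[OF T run22] by auto
  qed
  moreover have "b = 0"
  proof -
    obtain a' where "(a', b, 0, 0, 1, 2) \<in> T"
      using T run22 PLF_model_intervene_X by blast
    with T have "(0, b, 1, 2) \<in> S"
      using PLF_model_readout_A PLF_model_possibility_set_iff by metis
    then show "b = 0"
      using assms(2) PLF_model_outcomes_binary[OF T run22] by auto
  qed
  ultimately show False
    using T run22 assms(4) PLF_model_possibility_set_iff by metis
qed

text \<open>Hardy's state: up to normalisation it is orthogonal to \<open>e\<^sub>0 \<otimes> f\<^sub>1\<close>, \<open>f\<^sub>1 \<otimes> e\<^sub>0\<close>
  and \<open>f\<^sub>0 \<otimes> f\<^sub>0\<close>, where \<open>f\<^sub>0 = (1, 2)/\<surd>5\<close> and \<open>f\<^sub>1 = (2, -1)/\<surd>5\<close>, but not to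
  \<open>e\<^sub>0 \<otimes> e\<^sub>0\<close>. The second setting of each superobserver measures in the basis
  \<open>f\<^sub>0, f\<^sub>1\<close>.\<close>

definition hardy_state :: "nat \<Rightarrow> nat \<Rightarrow> complex" where
  "hardy_state i j =
     (if i = 0 \<and> j = 0 then 4/15 else if i = 0 \<and> j = 1 then 8/15
      else if i = 1 \<and> j = 0 then 8/15 else if i = 1 \<and> j = 1 then -9/15 else 0)"

definition hardy_meas :: "nat \<Rightarrow> nat \<Rightarrow> nat \<Rightarrow> nat \<Rightarrow> complex" where
  "hardy_meas x = binary_meas (line_proj 2 (if x = 1 then basis_vec 0 else (\<lambda>i. if i = 0 then 1 else 2)))"

lemma sum_lessThan_2: "(\<Sum>i<2. f i) = f 0 + f (1::nat)"
  by (simp add: numeral_2_eq_2)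

lemma hardy_possibility_set:
  defines "S \<equiv> possibility_set 2 2 hardy_state hardy_meas hardy_meas"
  shows "(0, 0, 1, 1) \<in> S" "(0, 1, 1, 2) \<notin> S" "(1, 0, 2, 1) \<notin> S" "(0, 0, 2, 2) \<notin> S"
  by (simp_all add: S_def possibility_set_def expect2_def sum_lessThan_2 hardy_state_def
      hardy_meas_def binary_meas_def line_proj_def cinner_def basis_vec_def)

lemma proj_meas_hardy_meas: "proj_meas 2 (hardy_meas x)"
  unfolding hardy_meas_def
  by (intro proj_meas_binary_meas is_projector_line_proj)
    (simp add: cinner_def basis_vec_def sum_lessThan_2)

theorem theorem5:
  shows "\<exists>(nA::nat) (nB::nat) (Psi::nat \<Rightarrow> nat \<Rightarrow> complex)
            (C0::nat \<Rightarrow> complex) C1 (D0::nat \<Rightarrow> complex) D1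
            (A::nat \<Rightarrow> nat \<Rightarrow> nat \<Rightarrow> nat \<Rightarrow> complex) (B::nat \<Rightarrow> nat \<Rightarrow> nat \<Rightarrow> nat \<Rightarrow> complex).
     unit_state nA nB Psi \<and>
     orthonormal2 nA C0 C1 \<and> orthonormal2 nB D0 D1 \<and>
     (\<forall>x\<in>{1,2}. proj_meas nA (A x)) \<and> (\<forall>y\<in>{1,2}. proj_meas nB (B y)) \<and>
     readout nA C0 (A 1) \<and> readout nB D0 (B 1) \<and>
     \<not> (\<exists>T. PLF_model (possibility_set nA nB Psi A B) T)"
proof -
  have "unit_state 2 2 hardy_state"
    by (simp add: unit_state_def hardy_state_def sum_lessThan_2)
  moreover have "orthonormal2 2 (basis_vec 0) (basis_vec 1)"
    by (simp add: orthonormal2_def cinner_def basis_vec_def sum_lessThan_2)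
  moreover have "readout 2 (basis_vec 0) (hardy_meas 1)"
    unfolding hardy_meas_def
    by (simp add: readout_binary_meas cinner_def basis_vec_def sum_lessThan_2)
  moreover have "\<nexists>T. PLF_model (possibility_set 2 2 hardy_state hardy_meas hardy_meas) T"
    using no_PLF_model_if_Hardy_pattern hardy_possibility_set by blast
  ultimately show ?thesis
    using proj_meas_hardy_meas by blast
qed

end
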